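(* Let $V$ be an $n$-dimensional vector space over $\mathbb{F}_q$ with $n\ge 4$, let $Y$ be a set of transvections in $\mathrm{SL}(V)$ and $H=\langle Y\rangle$. Then $H$ acts irreducibly on $V$ if and only if the following three conditions hold: (1) ${}_VY$ spans $V$; (2) $Y_{V^*}$ spans $V^*$; (3) the transvection graph $\Gamma(Y)$ is strongly connected.
   Context: Every transvection can be written as $1+u\otimes\phi$, i.e. $x\mapsto x+\phi(x)u$, with $0\ne u\in V$, $0\ne\phi\in V^*$, $\phi(u)=0$. ${}_VY=\{v\in V:\exists\phi\in V^*,\ 1+v\otimes\phi\in Y\}$ and $Y_{V^*}=\{\phi\in V^*:\exists v\in V,\ 1+v\otimes\phi\in Y\}$. The transvection graph $\Gamma(Y)$ is the directed graph with vertex set $Y$ and a directed edge from $s=1+u\otimes\phi$ to $t=1+v\otimes\psi$ iff $\psi(u)\ne 0$ (independent of the chosen representations). Strongly connected means there is a directed path between any two distinct vertices in each direction. *)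

theory Defs
  imports "HOL-Analysis.Analysis"
begin

text \<open>V = F^n with F a finite field and n = CARD('n); V^* identified with F^n via
  the pairing below; linear maps of V are n x n matrices acting by (*v).\<close>

definition pair :: "'a::field^'n \<Rightarrow> 'a^'n \<Rightarrow> 'a" where
  "pair \<phi> x = (\<Sum>i\<in>UNIV. \<phi> $ i * x $ i)"

definition outer :: "'a::field^'n \<Rightarrow> 'a^'n \<Rightarrow> 'a^'n^'n" where
  "outer u \<phi> = (\<chi> i j. u $ i * \<phi> $ j)"

definition transvection :: "'a::field^'n^'n \<Rightarrow> bool" where
  "transvection t \<longleftrightarrow> (\<exists>u \<phi>. u \<noteq> 0 \<and> \<phi> \<noteq> 0 \<and> pair \<phi> u = 0 \<and> t = mat 1 + outer u \<phi>)"

definition left_set :: "('a::field^'n^'n) set \<Rightarrow> ('a^'n) set" where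
  "left_set Y = {v. \<exists>\<phi>. mat 1 + outer v \<phi> \<in> Y}"

definition right_set :: "('a::field^'n^'n) set \<Rightarrow> ('a^'n) set" where
  "right_set Y = {\<phi>. \<exists>v. mat 1 + outer v \<phi> \<in> Y}"

definition tv_edge :: "'a::field^'n^'n \<Rightarrow> 'a^'n^'n \<Rightarrow> bool" where
  "tv_edge s t \<longleftrightarrow> (\<exists>u \<phi> v \<psi>. s = mat 1 + outer u \<phi> \<and> t = mat 1 + outer v \<psi> \<and> pair \<psi> u \<noteq> 0)"

definition tv_graph :: "('a::field^'n^'n) set \<Rightarrow> (('a^'n^'n) \<times> ('a^'n^'n)) set" where
  "tv_graph Y = {(s, t). s \<in> Y \<and> t \<in> Y \<and> tv_edge s t}"

definition strongly_connected :: "('b \<times> 'b) set \<Rightarrow> 'b set \<Rightarrow> bool" where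
  "strongly_connected E Y \<longleftrightarrow> (\<forall>s\<in>Y. \<forall>t\<in>Y. s \<noteq> t \<longrightarrow> (s, t) \<in> E\<^sup>+)"

inductive_set gen_group :: "('a::field^'n^'n) set \<Rightarrow> ('a^'n^'n) set" for Y where
  one: "mat 1 \<in> gen_group Y"
| gen: "t \<in> Y \<Longrightarrow> t \<in> gen_group Y"
| mult: "a \<in> gen_group Y \<Longrightarrow> b \<in> gen_group Y \<Longrightarrow> a ** b \<in> gen_group Y"
| inv: "a \<in> gen_group Y \<Longrightarrow> matrix_inv a \<in> gen_group Y"

definition acts_irreducibly :: "('a::field^'n^'n) set \<Rightarrow> bool" where
  "acts_irreducibly H \<longleftrightarrow>
     (\<forall>W. vec.subspace W \<and> (\<forall>h\<in>H. \<forall>w\<in>W. h *v w \<in> W) \<longrightarrow> W = {0} \<or> W = UNIV)"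

end

theory Submission imports Defs begin

text \<open>A subspace W is invariant under the transvection 1 + u \<otimes> \<phi> iff u \<in> W or \<phi>
  vanishes on W. Consequently, if a set A \<subseteq> Y is closed under the out-edges of \<Gamma>(Y),
  the span of the vectors u of the members of A is invariant under Y: taking A = Y gives (1),
  taking for A the vertices reachable from a vertex s gives (3), and the annihilator of the
  functionals \<phi> occurring in Y is an invariant subspace, which gives (2). Conversely, let
  W \<noteq> 0 be invariant. By (2) some t \<in> Y moves W; if 1 + u \<otimes> \<phi> moves W then u \<in> W,
  so every out-neighbour in \<Gamma>(Y) moves u and hence W. By (3) all of Y moves W, so W
  contains the vectors u of all members of Y, and W = V by (1).\<close>

lemma transvection_apply: "(mat 1 + outer u \<phi>) *v x = x + pair \<phi> x *s u"
proof -
  have "outer u \<phi> *v x = pair \<phi> x *s u"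
    by (simp add: vec_eq_iff outer_def pair_def matrix_vector_mult_def sum_distrib_left algebra_simps)
  then show ?thesis by (simp add: matrix_vector_mult_add_rdistrib)
qed

lemma pair_zero [simp]: "pair \<phi> 0 = 0"
  by (simp add: pair_def)

lemma pair_add: "pair \<phi> (x + y) = pair \<phi> x + pair \<phi> y"
  by (simp add: pair_def algebra_simps sum.distrib)

lemma pair_diff: "pair \<phi> (x - y) = pair \<phi> x - pair \<phi> y"
  by (simp add: pair_def algebra_simps sum_subtractf)

lemma pair_scale: "pair \<phi> (c *s x) = c * pair \<phi> x"
  by (simp add: pair_def algebra_simps sum_distrib_left)

lemma pair_commute: "pair \<phi> x = pair x \<phi>"
  by (simp add: pair_def mult.commute)

lemma pair_axis: "pair \<phi> (axis i 1) = \<phi> $ i"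
  by (simp add: pair_def axis_def if_distrib cong: if_cong)

lemma pair_eq_0_imp_eq_0: "(\<And>x. pair \<phi> x = 0) \<Longrightarrow> \<phi> = 0"
  by (metis pair_axis vec_eq_iff zero_index)

definition annihilator :: "('a::field^'n) set \<Rightarrow> ('a^'n) set" where
  "annihilator R = {x. \<forall>\<phi>\<in>R. pair \<phi> x = 0}"

lemma subspace_annihilator: "vec.subspace (annihilator R)"
  unfolding vec.subspace_def annihilator_def by (simp add: pair_add pair_scale)

lemma annihilator_singleton_eq_UNIV_iff: "annihilator {\<phi>} = UNIV \<longleftrightarrow> \<phi> = 0"
proof
  assume "annihilator {\<phi>} = UNIV"
  then show "\<phi> = 0"
    by (intro pair_eq_0_imp_eq_0) (auto simp: annihilator_def)
qed (simp add: annihilator_def pair_def)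

lemma span_eq_UNIV_iff_annihilator_eq_0: "vec.span R = UNIV \<longleftrightarrow> annihilator R = {0}"
proof
  assume span: "vec.span R = UNIV"
  have "x = 0" if "x \<in> annihilator R" for x
  proof -
    have "R \<subseteq> annihilator {x}"
      using that by (auto simp: annihilator_def pair_commute)
    then have "vec.span R \<subseteq> annihilator {x}"
      by (rule vec.span_minimal[OF _ subspace_annihilator])
    then show "x = 0"
      using span by (intro pair_eq_0_imp_eq_0) (auto simp: annihilator_def)
  qed
  then show "annihilator R = {0}"
    using vec.subspace_0[OF subspace_annihilator] by blast
next
  assume ann: "annihilator R = {0}"
  show "vec.span R = UNIV"
  proof (rule ccontr)
    assume "vec.span R \<noteq> UNIV"
    then obtain e where e: "e \<notin> vec.span R" by auto
    obtain B where B: "B \<subseteq> vec.span R" "vec.independent B" "vec.span R \<subseteq> vec.span B"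
      by (rule vec.maximal_independent_subset)
    have "e \<notin> vec.span B"
      using e B(1) vec.span_minimal[OF B(1) vec.subspace_span] by blast
    then have ind: "vec.independent (insert e B)" and "e \<notin> B"
      using B(2) vec.independent_insertI vec.span_base by blast+
    \<comment> \<open>a linear map vanishing on R but not at e; a nonzero row of its matrix annihilates R\<close>
    obtain g where g: "Vector_Spaces.linear (*s) (*s) g"
      "\<forall>x\<in>insert e B. g x = (if x = e then e else 0)"
      using vec.linear_independent_extend[OF ind, of "\<lambda>x. if x = e then e else 0"] by blast
    have "e \<noteq> 0"
      using e vec.span_zero by auto
    then have "matrix g *v e \<noteq> 0"
      using g by (simp add: matrix_works)
    then obtain i where i: "matrix g $ i \<noteq> 0"
      by (metis matrix_vector_mult_0 vec_eq_iff zero_index)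
    have "g x = 0" if "x \<in> vec.span B" for x
      by (rule vec.linear_eq_0_on_span[OF g(1) _ that]) (use g(2) \<open>e \<notin> B\<close> in auto)
    then have "g \<phi> = 0" if "\<phi> \<in> R" for \<phi>
      using B(3) vec.span_base[OF that] by blast
    then have "pair (matrix g $ i) \<phi> = 0" if "\<phi> \<in> R" for \<phi>
      using that matrix_works[OF g(1), of \<phi>]
      by (simp add: vec_eq_iff matrix_vector_mult_def pair_def mult.commute)
    then have "matrix g $ i \<in> annihilator R"
      by (simp add: annihilator_def pair_commute)
    with ann i show False by simp
  qed
qed

lemma transvectionE:
  assumes "transvection t"
  obtains u \<phi> where "t = mat 1 + outer u \<phi>" "u \<noteq> 0" "\<phi> \<noteq> 0" "pair \<phi> u = 0"
  using assms unfolding transvection_def by blast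

lemma outer_eq_0_iff: "outer u \<phi> = 0 \<longleftrightarrow> u = 0 \<or> \<phi> = 0"
  by (auto simp: outer_def vec_eq_iff)

lemma transvection_outer_nonzero:
  assumes "transvection (mat 1 + outer u \<phi>)"
  shows "u \<noteq> 0" "\<phi> \<noteq> 0"
proof -
  obtain u' \<phi>' where "outer u \<phi> = outer u' \<phi>'" "u' \<noteq> 0" "\<phi>' \<noteq> 0"
    using assms unfolding transvection_def by (metis add_left_cancel)
  then show "u \<noteq> 0" "\<phi> \<noteq> 0"
    by (metis outer_eq_0_iff)+
qed

lemma transvection_fixes_iff:
  assumes "transvection (mat 1 + outer u \<phi>)"
  shows "(mat 1 + outer u \<phi>) *v x = x \<longleftrightarrow> pair \<phi> x = 0"
  using transvection_outer_nonzero[OF assms] by (simp add: transvection_apply)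

lemma transvection_invariant_iff:
  assumes W: "vec.subspace W"
  shows "(\<forall>w\<in>W. (mat 1 + outer u \<phi>) *v w \<in> W) \<longleftrightarrow> u \<in> W \<or> W \<subseteq> annihilator {\<phi>}"
proof
  assume inv: "\<forall>w\<in>W. (mat 1 + outer u \<phi>) *v w \<in> W"
  show "u \<in> W \<or> W \<subseteq> annihilator {\<phi>}"
  proof (rule disjCI)
    assume "\<not> W \<subseteq> annihilator {\<phi>}"
    then obtain w where w: "w \<in> W" "pair \<phi> w \<noteq> 0"
      by (auto simp: annihilator_def)
    have "(mat 1 + outer u \<phi>) *v w - w \<in> W"
      using inv w(1) W vec.subspace_diff by blast
    then have "inverse (pair \<phi> w) *s ((mat 1 + outer u \<phi>) *v w - w) \<in> W"
      using W vec.subspace_scale by blast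
    then show "u \<in> W"
      using w(2) by (simp add: transvection_apply)
  qed
next
  assume "u \<in> W \<or> W \<subseteq> annihilator {\<phi>}"
  then show "\<forall>w\<in>W. (mat 1 + outer u \<phi>) *v w \<in> W"
    using W by (auto simp: transvection_apply annihilator_def intro: vec.subspace_add vec.subspace_scale)
qed

lemma matrix_inv_mult_cancel:
  fixes A :: "'a::semiring_1^'n^'n"
  assumes "invertible A"
  shows "A ** matrix_inv A = mat 1" "matrix_inv A ** A = mat 1"
proof -
  have "A ** matrix_inv A = mat 1 \<and> matrix_inv A ** A = mat 1"
    using assms unfolding matrix_inv_def invertible_def by (rule someI_ex)
  then show "A ** matrix_inv A = mat 1" "matrix_inv A ** A = mat 1"
    by auto
qed

lemma matrix_inv_unique:
  fixes A B :: "'a::semiring_1^'n^'n"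
  assumes "A ** B = mat 1" "B ** A = mat 1"
  shows "invertible A" "matrix_inv A = B"
proof -
  show inv: "invertible A"
    using assms invertible_def by blast
  have "matrix_inv A = matrix_inv A ** (A ** B)"
    using assms(1) by simp
  also have "\<dots> = B"
    by (simp add: matrix_mul_assoc matrix_inv_mult_cancel(2)[OF inv])
  finally show "matrix_inv A = B" .
qed

lemma invertible_matrix_inv:
  fixes A :: "'a::semiring_1^'n^'n"
  assumes "invertible A"
  shows "invertible (matrix_inv A)" "matrix_inv (matrix_inv A) = A"
  using matrix_inv_unique[OF matrix_inv_mult_cancel(2,1)[OF assms]] by auto

lemma matrix_inv_mult:
  fixes A B :: "'a::semiring_1^'n^'n"
  assumes A: "invertible A" and B: "invertible B"
  shows "invertible (A ** B)" "matrix_inv (A ** B) = matrix_inv B ** matrix_inv A"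
proof -
  have "(A ** B) ** (matrix_inv B ** matrix_inv A) = A ** (B ** matrix_inv B) ** matrix_inv A"
       "(matrix_inv B ** matrix_inv A) ** (A ** B) = matrix_inv B ** (matrix_inv A ** A) ** B"
    by (simp_all add: matrix_mul_assoc)
  then have "(A ** B) ** (matrix_inv B ** matrix_inv A) = mat 1"
            "(matrix_inv B ** matrix_inv A) ** (A ** B) = mat 1"
    by (simp_all add: matrix_inv_mult_cancel A B)
  then show "invertible (A ** B)" "matrix_inv (A ** B) = matrix_inv B ** matrix_inv A"
    by (rule matrix_inv_unique)+
qed

lemma matrix_inv_transvection:
  assumes "pair \<phi> u = 0"
  shows "invertible (mat 1 + outer u \<phi>)" "matrix_inv (mat 1 + outer u \<phi>) = mat 1 + outer (- u) \<phi>"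
proof -
  have "(mat 1 + outer u \<phi>) ** (mat 1 + outer (- u) \<phi>) = mat 1"
       "(mat 1 + outer (- u) \<phi>) ** (mat 1 + outer u \<phi>) = mat 1"
    unfolding matrix_eq
    by (simp_all add: transvection_apply flip: matrix_vector_mul_assoc)
      (simp_all add: pair_add pair_diff pair_scale assms algebra_simps)
  then show "invertible (mat 1 + outer u \<phi>)"
    "matrix_inv (mat 1 + outer u \<phi>) = mat 1 + outer (- u) \<phi>"
    by (rule matrix_inv_unique)+
qed

lemma gen_group_invariant:
  fixes Y :: "('a::field^'n^'n) set"
  assumes W: "vec.subspace W" and tv: "\<forall>t\<in>Y. transvection t"
    and inv: "\<forall>t\<in>Y. \<forall>w\<in>W. t *v w \<in> W" and "h \<in> gen_group Y"
  shows "\<forall>w\<in>W. h *v w \<in> W"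
proof -
  have "invertible h \<and> (\<forall>w\<in>W. h *v w \<in> W) \<and> (\<forall>w\<in>W. matrix_inv h *v w \<in> W)"
    using \<open>h \<in> gen_group Y\<close>
  proof (induction h rule: gen_group.induct)
    case one
    have id: "mat 1 ** mat 1 = (mat 1 :: 'a^'n^'n)" by simp
    show ?case
      using matrix_inv_unique[OF id id] by simp
  next
    case (gen t)
    then obtain u \<phi> where t: "t = mat 1 + outer u \<phi>" "pair \<phi> u = 0"
      using tv transvectionE by metis
    have "u \<in> W \<or> W \<subseteq> annihilator {\<phi>}"
      using inv gen t(1) transvection_invariant_iff[OF W] by blast
    then have "- u \<in> W \<or> W \<subseteq> annihilator {\<phi>}"
      using W vec.subspace_neg by blast
    then have "\<forall>w\<in>W. (mat 1 + outer (- u) \<phi>) *v w \<in> W"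
      using transvection_invariant_iff[OF W] by blast
    then show ?case
      using inv gen t matrix_inv_transvection[OF t(2)] by simp
  next
    case (mult a b)
    then show ?case by (simp add: matrix_inv_mult flip: matrix_vector_mul_assoc)
  next
    case (inv a)
    then show ?case by (simp add: invertible_matrix_inv)
  qed
  then show ?thesis by blast
qed

lemma acts_irreducibly_gen_group_iff:
  assumes "\<forall>t\<in>Y. transvection t"
  shows "acts_irreducibly (gen_group Y) \<longleftrightarrow>
    (\<forall>W. vec.subspace W \<and> (\<forall>t\<in>Y. \<forall>w\<in>W. t *v w \<in> W) \<longrightarrow> W = {0} \<or> W = UNIV)"
  using gen_group_invariant[OF _ assms] gen_group.gen unfolding acts_irreducibly_def by meson

lemma span_singleton_neq_UNIV:
  assumes "CARD('n) \<ge> 2"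
  shows "vec.span {x::'a::field^'n} \<noteq> UNIV"
proof
  assume "vec.span {x} = UNIV"
  then have "vec.dim (UNIV :: ('a^'n) set) \<le> 1"
    by (metis vec.dim_span vec.dim_singleton dual_order.refl zero_le_one)
  with assms show False
    unfolding vec_dim_card by linarith
qed

lemma acts_irreducibly_gen_group_nonempty:
  fixes Y :: "('a::field^'n^'n) set"
  assumes "CARD('n) \<ge> 2" and "acts_irreducibly (gen_group Y)" and "\<forall>t\<in>Y. transvection t"
  shows "Y \<noteq> {}"
proof
  assume "Y = {}"
  then have "vec.span {1::'a^'n} = {0} \<or> vec.span {1::'a^'n} = UNIV"
    using assms(2,3) by (simp add: acts_irreducibly_gen_group_iff)
  moreover have "(1::'a^'n) \<in> vec.span {1}" "(1::'a^'n) \<noteq> 0"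
    by (simp_all add: vec.span_base vec_eq_iff)
  ultimately show False
    using span_singleton_neq_UNIV[OF assms(1)] by blast
qed

lemma span_left_set_annihilated:
  assumes "A \<subseteq> Y" and closed: "tv_graph Y `` A \<subseteq> A"
    and t: "mat 1 + outer v \<psi> \<in> Y - A"
  shows "vec.span (left_set A) \<subseteq> annihilator {\<psi>}"
proof (rule vec.span_minimal[OF subsetI subspace_annihilator])
  fix u assume "u \<in> left_set A"
  then obtain \<phi> where a: "mat 1 + outer u \<phi> \<in> A"
    by (auto simp: left_set_def)
  have "pair \<psi> u = 0"
  proof (rule ccontr)
    assume "pair \<psi> u \<noteq> 0"
    then have "(mat 1 + outer u \<phi>, mat 1 + outer v \<psi>) \<in> tv_graph Y"
      using a t \<open>A \<subseteq> Y\<close> by (auto simp: tv_graph_def tv_edge_def)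
    then have "mat 1 + outer v \<psi> \<in> A"
      using closed a by blast
    then show False
      using t by blast
  qed
  then show "u \<in> annihilator {\<psi>}"
    by (simp add: annihilator_def)
qed

lemma span_left_set_invariant:
  assumes tv: "\<forall>t\<in>Y. transvection t" and "A \<subseteq> Y"
    and closed: "tv_graph Y `` A \<subseteq> A"
  shows "\<forall>t\<in>Y. \<forall>w\<in>vec.span (left_set A). t *v w \<in> vec.span (left_set A)"
proof
  fix t assume "t \<in> Y"
  then obtain v \<psi> where t: "t = mat 1 + outer v \<psi>"
    using tv transvectionE by metis
  have "v \<in> vec.span (left_set A) \<or> vec.span (left_set A) \<subseteq> annihilator {\<psi>}"
  proof (cases "t \<in> A")
    case True
    then show ?thesis
      using t by (auto simp: left_set_def intro: vec.span_base)
  next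
    case False
    then show ?thesis
      using span_left_set_annihilated[OF \<open>A \<subseteq> Y\<close> closed] t \<open>t \<in> Y\<close> by blast
  qed
  then show "\<forall>w\<in>vec.span (left_set A). t *v w \<in> vec.span (left_set A)"
    using t transvection_invariant_iff[OF vec.subspace_span] by blast
qed

lemma span_left_set_eq_UNIV:
  assumes irr: "acts_irreducibly (gen_group Y)" and tv: "\<forall>t\<in>Y. transvection t"
    and "A \<subseteq> Y" "A \<noteq> {}" and closed: "tv_graph Y `` A \<subseteq> A"
  shows "vec.span (left_set A) = UNIV"
proof -
  obtain a where "a \<in> A" using \<open>A \<noteq> {}\<close> by blast
  then obtain u \<phi> where "a = mat 1 + outer u \<phi>" "u \<noteq> 0"
    using tv \<open>A \<subseteq> Y\<close> transvectionE by (metis subsetD)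
  then have "u \<in> vec.span (left_set A)" "u \<noteq> 0"
    using \<open>a \<in> A\<close> by (auto simp: left_set_def intro: vec.span_base)
  moreover have "vec.span (left_set A) = {0} \<or> vec.span (left_set A) = UNIV"
    using irr[unfolded acts_irreducibly_gen_group_iff[OF tv]] vec.subspace_span
      span_left_set_invariant[OF tv \<open>A \<subseteq> Y\<close> closed] by blast
  ultimately show ?thesis
    by blast
qed

lemma acts_irreducibly_gen_group_span_left_set:
  assumes "acts_irreducibly (gen_group Y)" and "\<forall>t\<in>Y. transvection t" and "Y \<noteq> {}"
  shows "vec.span (left_set Y) = UNIV"
proof (rule span_left_set_eq_UNIV[OF assms(1,2) order_refl assms(3)])
  show "tv_graph Y `` Y \<subseteq> Y"
    by (auto simp: tv_graph_def)
qed

lemma acts_irreducibly_gen_group_strongly_connected: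
  assumes irr: "acts_irreducibly (gen_group Y)" and tv: "\<forall>t\<in>Y. transvection t"
  shows "strongly_connected (tv_graph Y) Y"
  unfolding strongly_connected_def
proof (intro ballI impI)
  fix s t assume "s \<in> Y" "t \<in> Y" "s \<noteq> t"
  show "(s, t) \<in> (tv_graph Y)\<^sup>+"
  proof (rule ccontr)
    assume unreachable: "(s, t) \<notin> (tv_graph Y)\<^sup>+"
    define A where "A = (tv_graph Y)\<^sup>* `` {s}"
    have "A \<subseteq> Y"
      using \<open>s \<in> Y\<close> by (auto simp: A_def tv_graph_def elim: rtranclE)
    have "s \<in> A" "t \<notin> A"
      using \<open>s \<noteq> t\<close> unreachable by (auto simp: A_def rtrancl_eq_or_trancl)
    have closed: "tv_graph Y `` A \<subseteq> A"
      by (auto simp: A_def)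
    obtain v \<psi> where t: "t = mat 1 + outer v \<psi>" "\<psi> \<noteq> 0"
      using tv \<open>t \<in> Y\<close> transvectionE by metis
    have "UNIV = vec.span (left_set A)"
      using span_left_set_eq_UNIV[OF irr tv \<open>A \<subseteq> Y\<close> _ closed] \<open>s \<in> A\<close> by blast
    also have "\<dots> \<subseteq> annihilator {\<psi>}"
      using span_left_set_annihilated[OF \<open>A \<subseteq> Y\<close> closed] t(1) \<open>t \<in> Y\<close> \<open>t \<notin> A\<close> by blast
    finally have "annihilator {\<psi>} = UNIV"
      by blast
    then show False
      using t(2) annihilator_singleton_eq_UNIV_iff by blast
  qed
qed

lemma acts_irreducibly_gen_group_span_right_set:
  assumes irr: "acts_irreducibly (gen_group Y)" and tv: "\<forall>t\<in>Y. transvection t" and "Y \<noteq> {}"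
  shows "vec.span (right_set Y) = UNIV"
proof -
  have "\<forall>t\<in>Y. \<forall>w\<in>annihilator (right_set Y). t *v w \<in> annihilator (right_set Y)"
  proof
    fix t assume "t \<in> Y"
    then obtain v \<psi> where t: "t = mat 1 + outer v \<psi>"
      using tv transvectionE by metis
    then have "annihilator (right_set Y) \<subseteq> annihilator {\<psi>}"
      using \<open>t \<in> Y\<close> by (auto simp: annihilator_def right_set_def)
    then show "\<forall>w\<in>annihilator (right_set Y). t *v w \<in> annihilator (right_set Y)"
      using t transvection_invariant_iff[OF subspace_annihilator] by blast
  qed
  then have "annihilator (right_set Y) = {0} \<or> annihilator (right_set Y) = UNIV"
    using irr[unfolded acts_irreducibly_gen_group_iff[OF tv]] subspace_annihilator by blast
  moreover have "annihilator (right_set Y) \<noteq> UNIV"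
  proof -
    obtain t where "t \<in> Y" using \<open>Y \<noteq> {}\<close> by blast
    then obtain u \<phi> where "t = mat 1 + outer u \<phi>" "\<phi> \<noteq> 0"
      using tv transvectionE by metis
    then have "annihilator (right_set Y) \<subseteq> annihilator {\<phi>}"
      using \<open>t \<in> Y\<close> by (auto simp: annihilator_def right_set_def)
    with \<open>\<phi> \<noteq> 0\<close> show ?thesis
      using annihilator_singleton_eq_UNIV_iff by blast
  qed
  ultimately show ?thesis
    by (simp add: span_eq_UNIV_iff_annihilator_eq_0)
qed

lemma strongly_connected_closed_subset_eq:
  assumes sc: "strongly_connected E Y" and "M \<subseteq> Y" "M \<noteq> {}" and closed: "E `` M \<subseteq> M"
  shows "M = Y"
proof -
  obtain s where "s \<in> M"
    using \<open>M \<noteq> {}\<close> by blast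
  have "Y \<subseteq> E\<^sup>* `` {s}"
    using sc \<open>M \<subseteq> Y\<close> \<open>s \<in> M\<close> unfolding strongly_connected_def
    by (auto simp: rtrancl_eq_or_trancl) blast
  also have "\<dots> \<subseteq> E\<^sup>* `` M"
    using \<open>s \<in> M\<close> by blast
  also have "\<dots> = M"
    using closed by (rule Image_closed_trancl)
  finally show ?thesis
    using \<open>M \<subseteq> Y\<close> by blast
qed

lemma exists_transvection_moving:
  assumes tv: "\<forall>t\<in>Y. transvection t" and "vec.span (right_set Y) = UNIV" and "w \<noteq> 0"
  shows "\<exists>t\<in>Y. t *v w \<noteq> w"
proof (rule ccontr)
  assume "\<not> (\<exists>t\<in>Y. t *v w \<noteq> w)"
  then have "w \<in> annihilator (right_set Y)"
    using tv transvection_fixes_iff by (fastforce simp: annihilator_def right_set_def)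
  then show False
    using assms(2,3) by (simp add: span_eq_UNIV_iff_annihilator_eq_0)
qed

lemma moving_transvection_out_neighbour:
  assumes tv: "\<forall>t\<in>Y. transvection t" and W: "vec.subspace W"
    and edge: "(s, t) \<in> tv_graph Y" and inv: "\<forall>w\<in>W. s *v w \<in> W" and moves: "\<exists>w\<in>W. s *v w \<noteq> w"
  shows "\<exists>w\<in>W. t *v w \<noteq> w"
proof -
  obtain u \<phi> v \<psi> where s: "s = mat 1 + outer u \<phi>" and t: "t = mat 1 + outer v \<psi>"
    and "pair \<psi> u \<noteq> 0" and "s \<in> Y" "t \<in> Y"
    using edge unfolding tv_graph_def tv_edge_def by blast
  have "\<not> W \<subseteq> annihilator {\<phi>}"
    using moves s tv \<open>s \<in> Y\<close> transvection_fixes_iff by (fastforce simp: annihilator_def)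
  then have "u \<in> W"
    using inv s transvection_invariant_iff[OF W] by blast
  moreover have "t *v u \<noteq> u"
    using t tv \<open>t \<in> Y\<close> \<open>pair \<psi> u \<noteq> 0\<close> transvection_fixes_iff by blast
  ultimately show ?thesis by blast
qed

lemma invariant_subspace_eq_UNIV:
  assumes tv: "\<forall>t\<in>Y. transvection t"
    and left: "vec.span (left_set Y) = UNIV" and right: "vec.span (right_set Y) = UNIV"
    and sc: "strongly_connected (tv_graph Y) Y"
    and W: "vec.subspace W" "W \<noteq> {0}" and inv: "\<forall>t\<in>Y. \<forall>w\<in>W. t *v w \<in> W"
  shows "W = UNIV"
proof -
  define M where "M = {t \<in> Y. \<exists>w\<in>W. t *v w \<noteq> w}"
  obtain w where "w \<in> W" "w \<noteq> 0"
    using W vec.subspace_0 by blast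
  then have "M \<noteq> {}"
    using exists_transvection_moving[OF tv right] unfolding M_def by blast
  moreover have "tv_graph Y `` M \<subseteq> M"
  proof
    fix t assume "t \<in> tv_graph Y `` M"
    then obtain s where "s \<in> M" "(s, t) \<in> tv_graph Y"
      by blast
    then have "t \<in> Y" "s \<in> Y" "\<exists>w\<in>W. s *v w \<noteq> w"
      by (auto simp: M_def tv_graph_def)
    then show "t \<in> M"
      using moving_transvection_out_neighbour[OF tv W(1) \<open>(s, t) \<in> tv_graph Y\<close>] inv
      by (simp add: M_def)
  qed
  ultimately have "M = Y"
    using strongly_connected_closed_subset_eq[OF sc] by (simp add: M_def)
  have "left_set Y \<subseteq> W"
  proof
    fix v assume "v \<in> left_set Y"
    then obtain \<phi> where t: "mat 1 + outer v \<phi> \<in> Y"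
      by (auto simp: left_set_def)
    then obtain w where "w \<in> W" "(mat 1 + outer v \<phi>) *v w \<noteq> w"
      using \<open>M = Y\<close> by (auto simp: M_def)
    moreover have "transvection (mat 1 + outer v \<phi>)"
      using t tv by blast
    ultimately have "\<not> W \<subseteq> annihilator {\<phi>}"
      by (auto simp: annihilator_def transvection_fixes_iff)
    then show "v \<in> W"
      using inv t transvection_invariant_iff[OF W(1)] by blast
  qed
  then show ?thesis
    using left vec.span_minimal[OF _ W(1)] by blast
qed

theorem theorem3p1:
  fixes Y :: "('a::{field,finite}^'n^'n) set"
  assumes "CARD('n) \<ge> 4"
    and "\<forall>t\<in>Y. transvection t \<and> det t = 1"
  shows "acts_irreducibly (gen_group Y) \<longleftrightarrow>
           vec.span (left_set Y) = UNIV \<and> vec.span (right_set Y) = UNIV \<and>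
           strongly_connected (tv_graph Y) Y"
proof -
  have tv: "\<forall>t\<in>Y. transvection t"
    using assms(2) by blast
  show ?thesis
  proof
    assume irr: "acts_irreducibly (gen_group Y)"
    \<comment> \<open>only dimension at least 2 is needed\<close>
    moreover have "CARD('n) \<ge> 2"
      using assms(1) by simp
    ultimately have "Y \<noteq> {}"
      using acts_irreducibly_gen_group_nonempty tv by blast
    then show "vec.span (left_set Y) = UNIV \<and> vec.span (right_set Y) = UNIV \<and>
               strongly_connected (tv_graph Y) Y"
      using irr tv acts_irreducibly_gen_group_span_left_set acts_irreducibly_gen_group_span_right_set
        acts_irreducibly_gen_group_strongly_connected by blast
  next
    assume "vec.span (left_set Y) = UNIV \<and> vec.span (right_set Y) = UNIV \<and>
            strongly_connected (tv_graph Y) Y"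
    then show "acts_irreducibly (gen_group Y)"
      using invariant_subspace_eq_UNIV[OF tv] acts_irreducibly_gen_group_iff[OF tv] by blast
  qed
qed

end
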